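(* If $2 \leq a \leq b$ are integers, then $a^{b-1} \cdot b^{a-1} \geq P_a(a+b-1) \cdot P_b(a+b-1)$.
   Context: $P_k(m)$ denotes the number of integer partitions of $m$ into exactly $k$ positive parts. *)

theory Defs
  imports Main "HOL-Library.Multiset"
begin

definition partitions_into :: "nat \<Rightarrow> nat \<Rightarrow> nat multiset set" where
  "partitions_into k m = {M. (\<forall>x \<in># M. 0 < x) \<and> sum_mset M = m \<and> size M = k}"

definition P :: "nat \<Rightarrow> nat \<Rightarrow> nat" where
  "P k m = card (partitions_into k m)"

end

theory Submission
  imports Defs
begin

text \<open>Subtracting one from every part maps a partition of \<open>k + n\<close> into \<open>k\<close> positive parts
  injectively to a weak composition of \<open>n\<close> into \<open>k\<close> parts (a length-\<open>k\<close> list of naturals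
  summing to \<open>n\<close>). There are \<open>(n + k - 1) choose n\<close> of these, and this is at most \<open>k ^ n\<close>.
  Applied with \<open>(k, n) = (a, b - 1)\<close> and \<open>(k, n) = (b, a - 1)\<close> this bounds both factors.\<close>

lemma binomial_add_le_Suc_power: "(n + j) choose n \<le> Suc j ^ n"
proof (induction n)
  case 0
  then show ?case by simp
next
  case (Suc n)
  have "Suc n * (Suc n + j choose Suc n) = Suc (n + j) * (n + j choose n)"
    using Suc_times_binomial[of n "n + j"] by simp
  also have "\<dots> \<le> Suc (n + j) * Suc j ^ n"
    using Suc.IH by (rule mult_le_mono2)
  also have "\<dots> \<le> (Suc n * Suc j) * Suc j ^ n"
    by (intro mult_right_mono) simp_all
  also have "\<dots> = Suc n * Suc j ^ Suc n"
    by (simp only: mult.assoc power_Suc)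
  finally show ?case
    by (simp only: mult_le_cancel1)
qed

lemma sum_list_map_minus_one:
  "\<forall>x\<in>set xs. 0 < (x::nat) \<Longrightarrow> sum_list (map (\<lambda>x. x - 1) xs) + length xs = sum_list xs"
  by (induction xs) auto

lemma P_le_card_weak_compositions:
  assumes "0 < k"
  shows "P k (k + n) \<le> card {l::nat list. length l = k \<and> sum_list l = n}"
proof -
  let ?f = "\<lambda>M. map (\<lambda>x. x - 1) (sorted_list_of_multiset M)"
  let ?C = "{l::nat list. length l = k \<and> sum_list l = n}"
  have "inj_on ?f (partitions_into k (k + n))"
  proof (rule inj_on_inverseI)
    fix M
    assume "M \<in> partitions_into k (k + n)"
    then have "map Suc (?f M) = sorted_list_of_multiset M"
      by (auto simp: partitions_into_def intro!: map_idI)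
    then show "mset (map Suc (?f M)) = M"
      by simp
  qed
  moreover have "?f ` partitions_into k (k + n) \<subseteq> ?C"
  proof
    fix l
    assume "l \<in> ?f ` partitions_into k (k + n)"
    then obtain M where M: "M \<in> partitions_into k (k + n)" and l: "l = ?f M"
      by blast
    have "length (sorted_list_of_multiset M) = k" "sum_list (sorted_list_of_multiset M) = k + n"
      using M by (simp_all add: partitions_into_def flip: size_mset sum_mset_sum_list)
    moreover have "sum_list l + length (sorted_list_of_multiset M) = sum_list (sorted_list_of_multiset M)"
      using M unfolding l by (intro sum_list_map_minus_one) (simp add: partitions_into_def)
    ultimately show "l \<in> ?C"
      using l by simp
  qed
  moreover have "finite ?C"
    using assms by (intro card_ge_0_finite) (simp add: card_length_sum_list zero_less_binomial)
  ultimately show ?thesis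
    unfolding P_def by (rule card_inj_on_le)
qed

lemma P_le_power:
  assumes "0 < k"
  shows "P k (k + n) \<le> k ^ n"
proof -
  obtain j where k: "k = Suc j"
    using assms by (cases k) auto
  have "P k (k + n) \<le> (n + j) choose n"
    using P_le_card_weak_compositions[OF assms, of n] by (simp add: card_length_sum_list k)
  also have "\<dots> \<le> k ^ n"
    unfolding k by (rule binomial_add_le_Suc_power)
  finally show ?thesis .
qed

theorem corollary2p3p1:
  fixes a b :: nat
  assumes "2 \<le> a" and "a \<le> b"
  shows "a ^ (b - 1) * b ^ (a - 1) \<ge> P a (a + b - 1) * P b (a + b - 1)"
proof -
  have "P a (a + (b - 1)) \<le> a ^ (b - 1)" "P b (b + (a - 1)) \<le> b ^ (a - 1)"
    using assms by (simp_all only: P_le_power)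
  moreover have "a + (b - 1) = a + b - 1" "b + (a - 1) = a + b - 1"
    using assms by simp_all
  ultimately show ?thesis
    by (simp add: mult_le_mono)
qed

end
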